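(* Let $\Omega_n=\dfrac{\pi^{n/2}}{\Gamma\left(\frac n2+1\right)}$ for $n\in\mathbb{N}_0$. Then \[ \left(1+\frac1n\right)^{\frac12-\frac1{4n}+\frac1{8n^2}}<\frac{\Omega_n^2}{\Omega_{n-1}\Omega_{n+1}} \] for every integer $n\ge5$, and \[ \frac{\Omega_n^2}{\Omega_{n-1}\Omega_{n+1}}<\left(1+\frac1n\right)^{\frac12-\frac1{4n}+\frac1{8n^2}+\frac1{48n^3}} \] for every integer $n\ge1$.
   Context: $\Omega_n$ is the volume of the unit ball in $\mathbb{R}^n$ ($\Omega_0=1$); $\Gamma$ is Euler's gamma function. *)

theory Defs
  imports "HOL-Analysis.Analysis"
begin

text \<open>Volume of the unit ball in R^n: pi^(n/2) / Gamma(n/2 + 1).\<close>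
definition Omega :: "nat \<Rightarrow> real" where
  "Omega n = pi powr (real n / 2) / Gamma (real n / 2 + 1)"

end

theory Submission
  imports Defs "HOL-Real_Asymp.Real_Asymp"
begin

text \<open>
  Let \<open>R n = Omega n ^ 2 / (Omega (n - 1) * Omega (n + 1))\<close>. The recurrence
  \<open>Omega (n + 2) = 2 pi / (n + 2) * Omega n\<close> gives \<open>R n * R (n + 1) = 1 + 1 / (n + 1)\<close>, and
  log-convexity of \<open>Gamma\<close> gives \<open>R n \<ge> 1\<close>; hence \<open>R n \<longrightarrow> 1\<close>. For an exponent \<open>e\<close>
  the deviation \<open>g n = ln (R n) - e n * ln (1 + 1 / n)\<close> therefore tends to 0, while
  \<open>g n - g (n + 2)\<close> involves logarithms only (\<open>ln_gap\<close>). If that difference is positive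
  from some \<open>N\<close> on, \<open>g (n + 2 k)\<close> decreases strictly to 0, so \<open>g n > 0\<close>: this is the lower
  bound, and the upper bound is symmetric. The sign of \<open>ln_gap\<close> is decided by writing
  \<open>ln (1 + 1 / m) = 2 artanh (1 / (2 m + 1))\<close>, truncating the artanh series after \<open>x ^ 5\<close>
  and bounding its tail by a geometric series; what remains is the sign of a polynomial in \<open>n\<close>.
\<close>

section \<open>Truncated artanh series\<close>

definition artanh_lb :: "real \<Rightarrow> real" where
  "artanh_lb x = x + x^3/3 + x^5/5"

definition artanh_ub :: "real \<Rightarrow> real" where
  "artanh_ub x = artanh_lb x + x^7 / (7 * (1 - x^2))"

lemma DERIV_le_imp_diff_le:
  fixes f g :: "real \<Rightarrow> real"
  assumes "a \<le> b"
    and f: "\<And>t. a \<le> t \<Longrightarrow> t \<le> b \<Longrightarrow> (f has_real_derivative f' t) (at t)"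
    and g: "\<And>t. a \<le> t \<Longrightarrow> t \<le> b \<Longrightarrow> (g has_real_derivative g' t) (at t)"
    and le: "\<And>t. a < t \<Longrightarrow> t < b \<Longrightarrow> f' t \<le> g' t"
  shows "f b - f a \<le> g b - g a"
proof -
  have deriv: "((\<lambda>t. g t - f t) has_real_derivative g' t - f' t) (at t)"
    if "a \<le> t" "t \<le> b" for t
    using f[OF that] g[OF that] by (rule DERIV_diff[rotated])
  have "g a - f a \<le> g b - f b"
  proof (rule DERIV_nonneg_imp_increasing_open[OF \<open>a \<le> b\<close>])
    show "\<exists>y. ((\<lambda>t. g t - f t) has_real_derivative y) (at t) \<and> 0 \<le> y"
      if "a < t" "t < b" for t
      using deriv[of t] le[OF that] that by auto
    show "continuous_on {a..b} (\<lambda>t. g t - f t)"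
      using deriv by (intro DERIV_atLeastAtMost_imp_continuous_on) auto
  qed
  then show ?thesis by simp
qed

lemma inverse_one_minus_square_expand:
  fixes t :: real assumes "t^2 \<noteq> 1"
  shows "1 / (1 - t^2) = 1 + t^2 + t^4 + t^6 / (1 - t^2)"
  using assms by (simp add: divide_simps) algebra

lemma artanh_lb_has_real_derivative:
  "(artanh_lb has_real_derivative 1 + t^2 + t^4) (at t)"
  unfolding artanh_lb_def [abs_def]
  by (auto intro!: derivative_eq_intros simp: algebra_simps)

lemma artanh_ub_has_real_derivative:
  fixes t :: real assumes "t^2 \<noteq> 1"
  shows "(artanh_ub has_real_derivative 1 / (1 - t^2) + 2*t^8 / (7*(1 - t^2)^2)) (at t)"
proof -
  have "((\<lambda>x. x^7 / (7*(1 - x^2))) has_real_derivative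
          t^6 / (1 - t^2) + 2*t^8 / (7*(1 - t^2)^2)) (at t)"
    using assms by (auto intro!: derivative_eq_intros simp: divide_simps) algebra
  from DERIV_add[OF artanh_lb_has_real_derivative this] show ?thesis
    unfolding inverse_one_minus_square_expand[OF assms]
    by (simp add: artanh_ub_def [abs_def] add_ac)
qed

lemma artanh_lb_le:
  fixes x :: real assumes "0 \<le> x" "x < 1"
  shows "artanh_lb x \<le> artanh x"
proof -
  have "artanh_lb x - artanh_lb 0 \<le> artanh x - artanh 0"
  proof (rule DERIV_le_imp_diff_le[OF \<open>0 \<le> x\<close>])
    fix t :: real assume t: "0 \<le> t" "t \<le> x"
    show "(artanh_lb has_real_derivative 1 + t^2 + t^4) (at t)"
      by (rule artanh_lb_has_real_derivative)
    show "(artanh has_real_derivative 1 / (1 - t^2)) (at t)"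
      using t assms by (intro artanh_real_has_field_derivative) auto
  next
    fix t :: real assume t: "0 < t" "t < x"
    then have "t^2 < 1" using assms by (simp add: power_less_one_iff abs_less_iff)
    then show "1 + t^2 + t^4 \<le> 1 / (1 - t^2)"
      by (simp add: inverse_one_minus_square_expand)
  qed
  then show ?thesis by (simp add: artanh_lb_def)
qed

lemma artanh_le_ub:
  fixes x :: real assumes "0 \<le> x" "x < 1"
  shows "artanh x \<le> artanh_ub x"
proof -
  have "artanh x - artanh 0 \<le> artanh_ub x - artanh_ub 0"
  proof (rule DERIV_le_imp_diff_le[OF \<open>0 \<le> x\<close>])
    fix t :: real assume t: "0 \<le> t" "t \<le> x"
    then have "\<bar>t\<bar> < 1" using assms by simp
    then show "(artanh has_real_derivative 1 / (1 - t^2)) (at t)"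
      by (rule artanh_real_has_field_derivative)
    from \<open>\<bar>t\<bar> < 1\<close> have "t^2 \<noteq> 1" by (metis abs_square_less_1 less_irrefl)
    then show "(artanh_ub has_real_derivative 1 / (1 - t^2) + 2*t^8 / (7*(1 - t^2)^2)) (at t)"
      by (rule artanh_ub_has_real_derivative)
  qed simp
  then show ?thesis by (simp add: artanh_ub_def artanh_lb_def)
qed

lemma ln_one_plus_inverse:
  fixes m :: real assumes "m > 0"
  shows "ln (1 + 1/m) = 2 * artanh (1 / (2*m + 1))"
proof -
  have "(1 + 1 / (2*m + 1)) / (1 - 1 / (2*m + 1)) = 1 + 1/m"
    using assms by (simp add: divide_simps)
  then show ?thesis by (simp add: artanh_def)
qed

lemma artanh_lb_inverse: "artanh_lb (1/a) = (15*a^4 + 5*a^2 + 3) / (15*a^5)"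
  by (cases "a = 0") (simp_all add: artanh_lb_def power_one_over divide_simps, algebra)

lemma artanh_ub_inverse:
  "artanh_ub (1/a) = (15*a^4 + 5*a^2 + 3) / (15*a^5) + 1 / (7*a^5*(a^2 - 1))"
proof (cases "a = 0 \<or> a^2 = 1")
  case True
  then show ?thesis by (auto simp: artanh_ub_def artanh_lb_inverse power_one_over)
next
  case False
  then have "a \<noteq> 0" "a^2 - 1 \<noteq> 0" by auto
  then show ?thesis
    by (simp add: artanh_ub_def artanh_lb_inverse power_one_over divide_simps) algebra
qed

section \<open>The logarithmic gap\<close>

definition ln_gap :: "(real \<Rightarrow> real) \<Rightarrow> real \<Rightarrow> real" where
  "ln_gap e x = ln (1 + 1/(x + 1)) - e x * ln (1 + 1/x) - (1 - e (x + 2)) * ln (1 + 1/(x + 2))"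

lemma ln_one_plus_inverse_bounds:
  fixes m :: real assumes "m > 0"
  shows "2 * artanh_lb (1 / (2*m + 1)) \<le> ln (1 + 1/m)"
    and "ln (1 + 1/m) \<le> 2 * artanh_ub (1 / (2*m + 1))"
proof -
  have "0 \<le> 1 / (2*m + 1)" "1 / (2*m + 1) < 1" using assms by simp_all
  then show "2 * artanh_lb (1 / (2*m + 1)) \<le> ln (1 + 1/m)"
    and "ln (1 + 1/m) \<le> 2 * artanh_ub (1 / (2*m + 1))"
    unfolding ln_one_plus_inverse[OF assms] by (simp_all add: artanh_lb_le artanh_le_ub)
qed

lemma ln_gap_bounds:
  fixes x :: real
  assumes "x > 0" "0 \<le> e x" "e (x + 2) \<le> 1"
  shows "2 * (artanh_lb (1/(2*x + 3)) - e x * artanh_ub (1/(2*x + 1))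
              - (1 - e (x + 2)) * artanh_ub (1/(2*x + 5))) \<le> ln_gap e x"
    and "ln_gap e x \<le> 2 * (artanh_ub (1/(2*x + 3)) - e x * artanh_lb (1/(2*x + 1))
              - (1 - e (x + 2)) * artanh_lb (1/(2*x + 5)))"
proof -
  have args: "2 * (x + 1) + 1 = 2*x + 3" "2 * (x + 2) + 1 = 2*x + 5" by simp_all
  note b0 = ln_one_plus_inverse_bounds[of x]
  note b1 = ln_one_plus_inverse_bounds[of "x + 1", unfolded args]
  note b2 = ln_one_plus_inverse_bounds[of "x + 2", unfolded args]
  have "0 \<le> 1 - e (x + 2)" using assms by simp
  note mono = mult_left_mono[OF _ \<open>0 \<le> e x\<close>] mult_left_mono[OF _ this]
  show "2 * (artanh_lb (1/(2*x + 3)) - e x * artanh_ub (1/(2*x + 1))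
              - (1 - e (x + 2)) * artanh_ub (1/(2*x + 5))) \<le> ln_gap e x"
    using b1(1) mono[OF b0(2)] mono[OF b2(2)] \<open>x > 0\<close> unfolding ln_gap_def by simp
  show "ln_gap e x \<le> 2 * (artanh_ub (1/(2*x + 3)) - e x * artanh_lb (1/(2*x + 1))
              - (1 - e (x + 2)) * artanh_lb (1/(2*x + 5)))"
    using b1(2) mono[OF b0(1)] mono[OF b2(1)] \<open>x > 0\<close> unfolding ln_gap_def by simp
qed

definition lower_exponent :: "real \<Rightarrow> real" where
  "lower_exponent x = 1/2 - 1/(4*x) + 1/(8*x^2)"

definition upper_exponent :: "real \<Rightarrow> real" where
  "upper_exponent x = lower_exponent x + 1/(48*x^3)"

lemma exponents_bounds:
  fixes x :: real assumes "1 \<le> x"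
  shows "0 \<le> lower_exponent x" "lower_exponent x \<le> upper_exponent x" "upper_exponent x \<le> 1"
proof -
  have "1/(4*x) \<le> 1/4" "1/(8*x^2) \<le> 1/8" "1/(48*x^3) \<le> 1/48"
    using assms by (simp_all add: divide_simps one_le_power)
  moreover have "0 \<le> 1/(4*x)" "0 \<le> 1/(8*x^2)" "0 \<le> 1/(48*x^3)" using assms by simp_all
  ultimately show "0 \<le> lower_exponent x" "lower_exponent x \<le> upper_exponent x"
      "upper_exponent x \<le> 1"
    unfolding upper_exponent_def lower_exponent_def by linarith+
qed

lemma lower_exponent_tendsto: "(\<lambda>n. lower_exponent (real n)) \<longlonglongrightarrow> 1/2"
  unfolding lower_exponent_def by real_asymp

lemma upper_exponent_tendsto: "(\<lambda>n. upper_exponent (real n)) \<longlonglongrightarrow> 1/2"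
  unfolding upper_exponent_def lower_exponent_def by real_asymp

lemma ln_gap_lower_exponent_pos:
  fixes x :: real assumes x: "5 \<le> x"
  shows "0 < ln_gap lower_exponent x"
proof -
  \<comment> \<open>In powers of \<open>x - 5\<close> the numerator below has positive coefficients only.\<close>
  define y where "y = x - 5"
  have "0 \<le> y" using x by (simp add: y_def)
  then have Q: "0 < 26185968398395855125 + 355374022580606103450 * y
      + 843999468955619441715 * y^2 + 1010456719515251474486 * y^3
      + 769692904021305719308 * y^4 + 413165188742342913244 * y^5
      + 165222057542758350676 * y^6 + 50882398971107649408 * y^7
      + 12315676792693688592 * y^8 + 2370731918078601728 * y^9
      + 364912852764155776 * y^10 + 44905397434548736 * y^11 + 4392208468321792 * y^12
      + 337252546808832 * y^13 + 19901314900992 * y^14 + 871550910464 * y^15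
      + 26691162112 * y^16 + 510361600 * y^17 + 4587520 * y^18"
    (is "0 < ?Q") by (intro add_pos_nonneg mult_nonneg_nonneg) simp_all
  have D: "0 < x^3 * (x+1) * (x+2)^3 * (x+3) * (2*x+1)^5 * (2*x+3)^5 * (2*x+5)^5"
    (is "0 < ?D") using x by simp
  have sq: "(2*x + 1)^2 - 1 = 4*x*(x + 1)" "(2*x + 5)^2 - 1 = 4*(x + 2)*(x + 3)"
    by algebra+
  have eq: "artanh_lb (1/(2*x + 3)) - lower_exponent x * artanh_ub (1/(2*x + 1))
          - (1 - lower_exponent (x + 2)) * artanh_ub (1/(2*x + 5)) = ?Q / (1680 * ?D)"
    using x unfolding artanh_ub_inverse sq artanh_lb_inverse lower_exponent_def y_def
    by (simp add: divide_simps) algebra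
  have "0 < artanh_lb (1/(2*x + 3)) - lower_exponent x * artanh_ub (1/(2*x + 1))
          - (1 - lower_exponent (x + 2)) * artanh_ub (1/(2*x + 5))"
    unfolding eq using Q D by (intro divide_pos_pos) simp_all
  then have "0 < 2 * (artanh_lb (1/(2*x + 3)) - lower_exponent x * artanh_ub (1/(2*x + 1))
          - (1 - lower_exponent (x + 2)) * artanh_ub (1/(2*x + 5)))"
    by simp
  also have "\<dots> \<le> ln_gap lower_exponent x"
    using x exponents_bounds[of x] exponents_bounds[of "x + 2"] by (intro ln_gap_bounds) auto
  finally show ?thesis .
qed

lemma ln_gap_upper_exponent_neg:
  fixes x :: real assumes x: "1 \<le> x"
  shows "ln_gap upper_exponent x < 0"
proof -
  \<comment> \<open>In powers of \<open>x - 1\<close> the numerator below has positive coefficients only.\<close>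
  define y where "y = x - 1"
  have "0 \<le> y" using x by (simp add: y_def)
  then have Q: "0 < 112701275630496 + 857013023236356 * y + 3038533556841783 * y^2
      + 6671327854825032 * y^3 + 10159429157810583 * y^4 + 11388534943813880 * y^5
      + 9731764310285610 * y^6 + 6475707601924680 * y^7 + 3397425814536200 * y^8
      + 1413525708375840 * y^9 + 466446161238336 * y^10 + 121401722818816 * y^11
      + 24619609153536 * y^12 + 3809096985600 * y^13 + 434266714624 * y^14
      + 34382555136 * y^15 + 1688143872 * y^16 + 38707200 * y^17"
    (is "0 < ?Q") by (intro add_pos_nonneg mult_nonneg_nonneg) simp_all
  have D: "0 < x^3 * (x+1) * (x+2)^3 * (x+3) * (2*x+1)^5 * (2*x+3)^5 * (2*x+5)^5"
    (is "0 < ?D") using x by simp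
  have sq: "(2*x + 3)^2 - 1 = 4*(x + 1)*(x + 2)"
    by algebra
  have eq: "artanh_ub (1/(2*x + 3)) - upper_exponent x * artanh_lb (1/(2*x + 1))
          - (1 - upper_exponent (x + 2)) * artanh_lb (1/(2*x + 5)) = - ?Q / (2520 * ?D)"
    using x unfolding artanh_ub_inverse sq artanh_lb_inverse upper_exponent_def lower_exponent_def y_def
    by (simp add: divide_simps) algebra
  have "ln_gap upper_exponent x \<le> 2 * (artanh_ub (1/(2*x + 3))
          - upper_exponent x * artanh_lb (1/(2*x + 1))
          - (1 - upper_exponent (x + 2)) * artanh_lb (1/(2*x + 5)))"
    using x exponents_bounds[of x] exponents_bounds[of "x + 2"] by (intro ln_gap_bounds) auto
  also have "\<dots> < 0"
    unfolding eq using Q D by (simp add: divide_neg_pos)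
  finally show ?thesis .
qed

section \<open>Volumes of unit balls\<close>

lemma Omega_pos: "0 < Omega n"
  unfolding Omega_def by (intro divide_pos_pos Gamma_real_pos) auto

lemma Omega_add_2: "Omega (n + 2) = 2 * pi / (real n + 2) * Omega n"
proof -
  have arg: "real (n + 2) / 2 + 1 = (real n / 2 + 1) + 1"
    by simp
  have Gamma_eq: "Gamma (real (n + 2) / 2 + 1) = (real n / 2 + 1) * Gamma (real n / 2 + 1)"
    unfolding arg by (rule Gamma_plus1) (auto simp: nonpos_Ints_def)
  have powr_eq: "pi powr (real (n + 2) / 2) = pi * pi powr (real n / 2)"
    by (simp add: add_divide_distrib powr_add)
  show ?thesis
    unfolding Omega_def Gamma_eq powr_eq by (simp add: field_simps)
qed

lemma Omega_log_convex:
  assumes "1 \<le> n"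
  shows "Omega (n - 1) * Omega (n + 1) \<le> Omega n ^ 2"
proof -
  define a b c where "a = real n / 2 + 1 / 2" and "b = real n / 2 + 3 / 2" and "c = real n / 2 + 1"
  have Gamma_args: "real (n - 1) / 2 + 1 = a" "real (n + 1) / 2 + 1 = b" "real n / 2 + 1 = c"
    using assms by (simp_all add: a_def b_def c_def of_nat_diff field_simps)
  have pos: "0 < a" "0 < b" "0 < c" by (simp_all add: a_def b_def c_def add_pos_nonneg)
  then have Gamma_pos: "0 < Gamma a" "0 < Gamma b" "0 < Gamma c" by simp_all
  have "c = (1 - 1/2) *\<^sub>R a + (1/2) *\<^sub>R b" by (simp add: a_def b_def c_def field_simps)
  then have "ln (Gamma c) \<le> (1 - 1/2) * ln (Gamma a) + (1/2) * ln (Gamma b)"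
    using convex_onD[OF log_convex_Gamma_real, of "1/2" a b] pos by simp
  then have "ln (Gamma c ^ 2) \<le> ln (Gamma a * Gamma b)"
    using Gamma_pos by (simp add: ln_mult ln_realpow)
  then have Gamma_le: "Gamma c ^ 2 \<le> Gamma a * Gamma b"
    using Gamma_pos by simp
  have "pi powr (real (n - 1) / 2) * pi powr (real (n + 1) / 2) = (pi powr (real n / 2)) ^ 2"
    using assms by (simp add: of_nat_diff powr_add[symmetric] power2_eq_square field_simps)
  then have "Omega (n - 1) * Omega (n + 1) = (pi powr (real n / 2)) ^ 2 / (Gamma a * Gamma b)"
    unfolding Omega_def Gamma_args by simp
  also have "\<dots> \<le> (pi powr (real n / 2)) ^ 2 / Gamma c ^ 2"
    using Gamma_le Gamma_pos by (intro divide_left_mono) auto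
  also have "\<dots> = Omega n ^ 2"
    unfolding Omega_def Gamma_args by (simp add: power_divide)
  finally show ?thesis .
qed

definition Omega_ratio :: "nat \<Rightarrow> real" where
  "Omega_ratio n = Omega n ^ 2 / (Omega (n - 1) * Omega (n + 1))"

lemma Omega_ratio_ge_1: "1 \<le> n \<Longrightarrow> 1 \<le> Omega_ratio n"
  unfolding Omega_ratio_def
  using Omega_log_convex[of n] Omega_pos[of "n - 1"] Omega_pos[of "n + 1"] by simp

lemma Omega_ratio_mult_Suc:
  assumes "1 \<le> n"
  shows "Omega_ratio n * Omega_ratio (n + 1) = 1 + 1 / (real n + 1)"
proof -
  have "Omega (n + 1) = 2 * pi / (real n + 1) * Omega (n - 1)"
    using Omega_add_2[of "n - 1"] assms by (simp add: of_nat_diff)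
  moreover have "Omega (n + 2) = 2 * pi / (real n + 2) * Omega n"
    by (rule Omega_add_2)
  ultimately show ?thesis
    unfolding Omega_ratio_def
    using Omega_pos[of "n - 1"] Omega_pos[of n] Omega_pos[of "n + 1"] Omega_pos[of "n + 2"]
    by (simp add: field_simps power2_eq_square)
qed

lemma Omega_ratio_tendsto_1: "Omega_ratio \<longlonglongrightarrow> 1"
proof (rule tendsto_sandwich)
  show "\<forall>\<^sub>F n in sequentially. 1 \<le> Omega_ratio n"
    using eventually_ge_at_top[of 1] by eventually_elim (rule Omega_ratio_ge_1)
  show "\<forall>\<^sub>F n in sequentially. Omega_ratio n \<le> 1 + 1 / (real n + 1)"
    using eventually_ge_at_top[of 1]
  proof eventually_elim
    case (elim n)
    have "Omega_ratio n * 1 \<le> Omega_ratio n * Omega_ratio (n + 1)"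
      using Omega_ratio_ge_1[of n] Omega_ratio_ge_1[of "n + 1"] elim by simp
    then show ?case using Omega_ratio_mult_Suc[OF elim] by simp
  qed
  show "(\<lambda>n. 1 + 1 / (real n + 1)) \<longlonglongrightarrow> 1" by real_asymp
qed simp

section \<open>Telescoping\<close>

lemma pos_if_tendsto_0_and_decreasing_by_2:
  fixes g :: "nat \<Rightarrow> real"
  assumes "g \<longlonglongrightarrow> 0" and step: "\<And>m. N \<le> m \<Longrightarrow> g (m + 2) < g m" and "N \<le> n"
  shows "0 < g n"
proof -
  define s where "s = (\<lambda>k. g (n + 2*k))"
  have "strict_mono (\<lambda>k. n + 2*k)" by (rule strict_monoI) simp
  with \<open>g \<longlonglongrightarrow> 0\<close> have "(g \<circ> (\<lambda>k. n + 2*k)) \<longlonglongrightarrow> 0"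
    by (rule LIMSEQ_subseq_LIMSEQ)
  then have "s \<longlonglongrightarrow> 0" by (simp add: s_def comp_def)
  moreover have "decseq s"
    using step \<open>N \<le> n\<close> by (intro decseq_SucI) (simp add: s_def less_imp_le algebra_simps)
  ultimately have "0 \<le> s 1" by (metis decseq_ge)
  moreover have "s 1 < s 0" using step[OF \<open>N \<le> n\<close>] by (simp add: s_def)
  ultimately show ?thesis by (simp add: s_def)
qed

lemma ln_Omega_ratio_deviation_step:
  assumes "1 \<le> n"
  shows "(ln (Omega_ratio n) - e (real n) * ln (1 + 1 / real n))
       - (ln (Omega_ratio (n + 2)) - e (real (n + 2)) * ln (1 + 1 / real (n + 2)))
       = ln_gap e (real n)"
proof -
  have ln_sum: "ln (Omega_ratio m) + ln (Omega_ratio (m + 1)) = ln (1 + 1 / (real m + 1))"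
    if "1 \<le> m" for m
    using Omega_ratio_mult_Suc[OF that] Omega_ratio_ge_1[OF that] Omega_ratio_ge_1[of "m + 1"]
    by (simp add: ln_mult_pos[symmetric])
  show ?thesis
    using ln_sum[OF assms] ln_sum[of "n + 1"] by (simp add: ln_gap_def algebra_simps)
qed

lemma ln_Omega_ratio_deviation_tendsto_0:
  assumes "(\<lambda>n. e (real n)) \<longlonglongrightarrow> c"
  shows "(\<lambda>n. ln (Omega_ratio n) - e (real n) * ln (1 + 1 / real n)) \<longlonglongrightarrow> 0"
proof -
  have "(\<lambda>n. ln (1 + 1 / real n)) \<longlonglongrightarrow> 0" by real_asymp
  then have "(\<lambda>n. ln (Omega_ratio n) - e (real n) * ln (1 + 1 / real n)) \<longlonglongrightarrow> ln 1 - c * 0"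
    by (intro tendsto_intros Omega_ratio_tendsto_1 assms) simp
  then show ?thesis by simp
qed

lemma one_plus_inverse_pos: "0 < 1 + 1 / real n"
  by (intro add_pos_nonneg) simp_all

lemma powr_less_Omega_ratio:
  assumes "(\<lambda>n. e (real n)) \<longlonglongrightarrow> c" and gap: "\<And>m. N \<le> m \<Longrightarrow> 0 < ln_gap e (real m)"
    and "1 \<le> N" "N \<le> n"
  shows "(1 + 1 / real n) powr e (real n) < Omega_ratio n"
proof -
  have "0 < ln (Omega_ratio n) - e (real n) * ln (1 + 1 / real n)"
  proof (rule pos_if_tendsto_0_and_decreasing_by_2[OF _ _ \<open>N \<le> n\<close>])
    show "(\<lambda>n. ln (Omega_ratio n) - e (real n) * ln (1 + 1 / real n)) \<longlonglongrightarrow> 0"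
      using assms(1) by (rule ln_Omega_ratio_deviation_tendsto_0)
  next
    fix m assume "N \<le> m"
    then show "ln (Omega_ratio (m + 2)) - e (real (m + 2)) * ln (1 + 1 / real (m + 2))
        < ln (Omega_ratio m) - e (real m) * ln (1 + 1 / real m)"
      using gap ln_Omega_ratio_deviation_step[of m e] \<open>1 \<le> N\<close> by force
  qed
  then have "ln ((1 + 1 / real n) powr e (real n)) < ln (Omega_ratio n)"
    by simp
  then show ?thesis
    using Omega_ratio_ge_1[of n] assms(3,4) one_plus_inverse_pos[of n]
    by (subst (asm) ln_less_cancel_iff) auto
qed

lemma Omega_ratio_less_powr:
  assumes "(\<lambda>n. e (real n)) \<longlonglongrightarrow> c" and gap: "\<And>m. N \<le> m \<Longrightarrow> ln_gap e (real m) < 0"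
    and "1 \<le> N" "N \<le> n"
  shows "Omega_ratio n < (1 + 1 / real n) powr e (real n)"
proof -
  have "0 < e (real n) * ln (1 + 1 / real n) - ln (Omega_ratio n)"
  proof (rule pos_if_tendsto_0_and_decreasing_by_2[OF _ _ \<open>N \<le> n\<close>])
    show "(\<lambda>n. e (real n) * ln (1 + 1 / real n) - ln (Omega_ratio n)) \<longlonglongrightarrow> 0"
      using tendsto_minus[OF ln_Omega_ratio_deviation_tendsto_0[OF assms(1)]] by simp
  next
    fix m assume "N \<le> m"
    then show "e (real (m + 2)) * ln (1 + 1 / real (m + 2)) - ln (Omega_ratio (m + 2))
        < e (real m) * ln (1 + 1 / real m) - ln (Omega_ratio m)"
      using gap ln_Omega_ratio_deviation_step[of m e] \<open>1 \<le> N\<close> by force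
  qed
  then have "ln (Omega_ratio n) < ln ((1 + 1 / real n) powr e (real n))"
    by simp
  then show ?thesis
    using Omega_ratio_ge_1[of n] assms(3,4) one_plus_inverse_pos[of n]
    by (subst (asm) ln_less_cancel_iff) auto
qed

theorem theorem18:
  shows "(\<forall>n::nat. n \<ge> 5 \<longrightarrow>
           (1 + 1 / real n) powr (1/2 - 1 / (4 * real n) + 1 / (8 * real n ^ 2))
             < Omega n ^ 2 / (Omega (n - 1) * Omega (n + 1))) \<and>
         (\<forall>n::nat. n \<ge> 1 \<longrightarrow>
           Omega n ^ 2 / (Omega (n - 1) * Omega (n + 1))
             < (1 + 1 / real n) powr (1/2 - 1 / (4 * real n) + 1 / (8 * real n ^ 2) + 1 / (48 * real n ^ 3)))"
proof (intro conjI allI impI)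
  fix n :: nat assume "5 \<le> n"
  then have "(1 + 1 / real n) powr lower_exponent (real n) < Omega_ratio n"
    by (intro powr_less_Omega_ratio[OF lower_exponent_tendsto _ _ \<open>5 \<le> n\<close>]
          ln_gap_lower_exponent_pos) simp_all
  then show "(1 + 1 / real n) powr (1/2 - 1 / (4 * real n) + 1 / (8 * real n ^ 2))
             < Omega n ^ 2 / (Omega (n - 1) * Omega (n + 1))"
    by (simp add: lower_exponent_def Omega_ratio_def)
next
  fix n :: nat assume "1 \<le> n"
  then have "Omega_ratio n < (1 + 1 / real n) powr upper_exponent (real n)"
    by (intro Omega_ratio_less_powr[OF upper_exponent_tendsto _ _ \<open>1 \<le> n\<close>]
          ln_gap_upper_exponent_neg) simp_all
  then show "Omega n ^ 2 / (Omega (n - 1) * Omega (n + 1))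
             < (1 + 1 / real n) powr (1/2 - 1 / (4 * real n) + 1 / (8 * real n ^ 2) + 1 / (48 * real n ^ 3))"
    by (simp add: upper_exponent_def lower_exponent_def Omega_ratio_def)
qed

end
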